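(* Let $M_1=\begin{bmatrix} A_1 & B_1\\ 0 & C_1\end{bmatrix}$ and $M_2=\begin{bmatrix} A_2 & B_2\\ 0 & C_2\end{bmatrix}$ be two $m\times n$ ACI-matrices over a field $\mathbb{F}$, where $A_1$ and $A_2$ have the same number $n_1$ of columns. Suppose there are a nonsingular constant matrix $R$ of order $m$ and permutation matrices $Q$ of order $n_1$ and $Q'$ of order $n-n_1$ such that $$\begin{bmatrix} A_2 & B_2\\ 0 & C_2\end{bmatrix}=R\begin{bmatrix} A_1 & B_1\\ 0 & C_1\end{bmatrix}\begin{bmatrix} Q & 0\\ 0 & Q'\end{bmatrix}.$$ If $A_1$ and $A_2$ both have linearly independent rows, then $A_1\sim A_2$ and $C_1\sim C_2$.
   Context: Let $\mathbb{F}$ be a field. An ACI-matrix is a matrix with entries in $\mathbb{F}[x_1,\dots,x_k]$ whose entries are polynomials of degree at most one and such that no indeterminate appears in two different columns. Two ACI-matrices satisfy $N\sim N'$ (equivalent) if $N'=RNQ$ for some nonsingular constant matrix $R$ over $\mathbb{F}$ and some permutation matrix $Q$. Blocks may be degenerate (zero rows or zero columns). Linear independence of rows is over $\mathbb{F}$: if a column involves indeterminates $y_1,\dots,y_t$, its entries lie in the $\mathbb{F}$-vector space $\mathbb{F}+\mathbb{F}y_1+\dots+\mathbb{F}y_t$, and rows are vectors in the product of these spaces over all columns. *)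

theory Defs
  imports "Jordan_Normal_Form.Matrix" "HOL-Combinatorics.Permutations"
begin

text \<open>An ACI-matrix with entries in F[x_1,...,x_k] of degree at most one is represented by
its coefficient matrices: N 0 is the constant part, N s (1 \<le> s \<le> k) is the coefficient
matrix of x_s, so that the matrix is N 0 + x_1 N 1 + ... + x_k N k.  Values N s for s > k
are irrelevant.\<close>

definition aci_mat :: "nat \<Rightarrow> nat \<Rightarrow> nat \<Rightarrow> (nat \<Rightarrow> 'a::field mat) \<Rightarrow> bool" where
  "aci_mat k m n N \<longleftrightarrow>
     (\<forall>s\<le>k. N s \<in> carrier_mat m n) \<and>
     (\<forall>s\<in>{1..k}. \<forall>j1<n. \<forall>j2<n.
        (\<exists>i<m. N s $$ (i, j1) \<noteq> 0) \<and> (\<exists>i<m. N s $$ (i, j2) \<noteq> 0) \<longrightarrow> j1 = j2)"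

definition is_perm_mat :: "nat \<Rightarrow> 'a::field mat \<Rightarrow> bool" where
  "is_perm_mat n P \<longleftrightarrow>
     (\<exists>p. p permutes {..<n} \<and> P = mat n n (\<lambda>(i, j). if p i = j then 1 else 0))"

text \<open>Rows of an r-row ACI-matrix are linearly independent over F: the only constant
combination of rows that vanishes (as a vector of polynomials) is the trivial one.\<close>
definition aci_rows_indep :: "nat \<Rightarrow> nat \<Rightarrow> (nat \<Rightarrow> 'a::field mat) \<Rightarrow> bool" where
  "aci_rows_indep k r N \<longleftrightarrow>
     (\<forall>v \<in> carrier_vec r. (\<forall>s\<le>k. transpose_mat (N s) *\<^sub>v v = 0\<^sub>v (dim_col (N s))) \<longrightarrow> v = 0\<^sub>v r)"

definition aci_equiv :: "nat \<Rightarrow> nat \<Rightarrow> nat \<Rightarrow> (nat \<Rightarrow> 'a::field mat) \<Rightarrow> nat \<Rightarrow> nat \<Rightarrow> (nat \<Rightarrow> 'a mat) \<Rightarrow> bool" where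
  "aci_equiv k r c N r' c' N' \<longleftrightarrow> r = r' \<and> c = c' \<and>
     (\<exists>R P. R \<in> carrier_mat r r \<and> invertible_mat R \<and> is_perm_mat c P \<and>
        (\<forall>s\<le>k. N' s = R * N s * P))"

end

theory Submission
  imports Defs "Jordan_Normal_Form.Determinant"
begin

(* Split R conformally with the two block structures. Comparing lower left blocks gives
   R21 A1 Q = 0 for every coefficient matrix, so R21 A1 = 0, and the linear independence of
   the rows of A1 forces R21 = 0. Then A2 = R11 A1 Q and C2 = R22 C1 Q'. The same argument
   applied to R^-1 and the inverse permutation (using the independence of the rows of A2)
   shows that R^-1 is block upper triangular as well, so its diagonal blocks are two-sided
   inverses of R11 and R22. Two-sided invertibility of the a priori rectangular R11 gives
   m1 = m2. *)

lemma split_block_four_block_mat: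
  assumes "A \<in> carrier_mat nr1 nc1" "B \<in> carrier_mat nr1 nc2"
    "C \<in> carrier_mat nr2 nc1" "D \<in> carrier_mat nr2 nc2"
  shows "split_block (four_block_mat A B C D) nr1 nc1 = (A, B, C, D)"
proof -
  let ?M = "four_block_mat A B C D"
  have dims: "dim_row ?M - nr1 = nr2" "dim_col ?M - nc1 = nc2"
    using assms by auto
  have "mat nr1 nc1 (($$) ?M) = A"
    by (rule eq_matI) (use assms in auto)
  moreover have "mat nr1 nc2 (\<lambda>(i, j). ?M $$ (i, j + nc1)) = B"
    by (rule eq_matI) (use assms in auto)
  moreover have "mat nr2 nc1 (\<lambda>(i, j). ?M $$ (i + nr1, j)) = C"
    by (rule eq_matI) (use assms in auto)
  moreover have "mat nr2 nc2 (\<lambda>(i, j). ?M $$ (i + nr1, j + nc1)) = D"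
    by (rule eq_matI) (use assms in auto)
  ultimately show ?thesis
    unfolding split_block_def Let_def dims by simp
qed

lemma four_block_mat_eqD:
  assumes "X1 \<in> carrier_mat nr1 nc1" "X2 \<in> carrier_mat nr1 nc2"
    "X3 \<in> carrier_mat nr2 nc1" "X4 \<in> carrier_mat nr2 nc2"
    and "Y1 \<in> carrier_mat nr1 nc1" "Y2 \<in> carrier_mat nr1 nc2"
    "Y3 \<in> carrier_mat nr2 nc1" "Y4 \<in> carrier_mat nr2 nc2"
    and "four_block_mat X1 X2 X3 X4 = four_block_mat Y1 Y2 Y3 Y4"
  shows "X1 = Y1" "X2 = Y2" "X3 = Y3" "X4 = Y4"
proof -
  have "(X1, X2, X3, X4) = split_block (four_block_mat Y1 Y2 Y3 Y4) nr1 nc1"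
    using split_block_four_block_mat[OF assms(1-4)] assms(9) by simp
  also have "\<dots> = (Y1, Y2, Y3, Y4)"
    by (rule split_block_four_block_mat[OF assms(5-8)])
  finally show "X1 = Y1" "X2 = Y2" "X3 = Y3" "X4 = Y4"
    by simp_all
qed

lemma perm_mat_carrier:
  assumes "is_perm_mat n (P :: 'a::field mat)"
  shows "P \<in> carrier_mat n n" and "transpose_mat P \<in> carrier_mat n n"
  using assms unfolding is_perm_mat_def by auto

lemma perm_mat_transpose_inverse:
  assumes "is_perm_mat n (P :: 'a::field mat)"
  shows "P * transpose_mat P = 1\<^sub>m n" and "transpose_mat P * P = 1\<^sub>m n"
proof -
  obtain p where p: "p permutes {..<n}" and P: "P = mat n n (\<lambda>(i, j). if p i = j then 1 else 0)"
    using assms unfolding is_perm_mat_def by blast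
  show inv: "P * transpose_mat P = 1\<^sub>m n"
  proof (rule eq_matI)
    fix i j assume "i < dim_row (1\<^sub>m n :: 'a mat)" "j < dim_col (1\<^sub>m n :: 'a mat)"
    then have i: "i < n" and j: "j < n" by auto
    have "(P * transpose_mat P) $$ (i, j) =
        (\<Sum>l\<in>{0..<n}. (if p i = l then 1 else 0) * (if p j = l then 1 else 0))"
      using i j unfolding P by (simp add: scalar_prod_def)
    also have "\<dots> = (\<Sum>l\<in>{0..<n}. if l = p i then (if p j = p i then 1 else 0) else 0)"
      by (rule sum.cong) auto
    also have "\<dots> = (if p j = p i then 1 else 0)"
      using permutes_in_image[OF p] i by simp
    also have "\<dots> = 1\<^sub>m n $$ (i, j)"
      using permutes_inj[OF p] i j by (auto dest: injD)
    finally show "(P * transpose_mat P) $$ (i, j) = 1\<^sub>m n $$ (i, j)" .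
  qed (use P in auto)
  then show "transpose_mat P * P = 1\<^sub>m n"
    by (rule mat_mult_left_right_inverse[rotated 2]) (use P in auto)
qed

lemma mult_four_block_diag_mat:
  assumes "A \<in> carrier_mat n1 n1" "B \<in> carrier_mat n2 n2"
    "C \<in> carrier_mat n1 n1" "D \<in> carrier_mat n2 n2"
  shows "four_block_mat A (0\<^sub>m n1 n2) (0\<^sub>m n2 n1) B * four_block_mat C (0\<^sub>m n1 n2) (0\<^sub>m n2 n1) D =
    four_block_mat (A * C) (0\<^sub>m n1 n2) (0\<^sub>m n2 n1) (B * D)"
  using assms by (subst mult_four_block_mat[of _ n1 n1 _ n2 _ n2 _ _ n1 _ n2]) auto

lemma mat_right_inverse_dim_le:
  fixes A :: "'a::field mat"
  assumes A: "A \<in> carrier_mat a b" and B: "B \<in> carrier_mat b a" and AB: "A * B = 1\<^sub>m a"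
  shows "a \<le> b"
  \<comment> \<open>Padding A and B with zeros gives square matrices with A' B' = 1, hence B' A' = 1;
    but B' A' has a zero row when b < a.\<close>
proof (rule ccontr)
  assume "\<not> a \<le> b"
  then have ba: "b < a" by simp
  define A' where "A' = mat a a (\<lambda>(i, j). if j < b then A $$ (i, j) else 0)"
  define B' where "B' = mat a a (\<lambda>(i, j). if i < b then B $$ (i, j) else 0)"
  have A': "A' \<in> carrier_mat a a" and B': "B' \<in> carrier_mat a a"
    unfolding A'_def B'_def by auto
  have "A' * B' = 1\<^sub>m a"
  proof (rule eq_matI)
    fix i j assume "i < dim_row (1\<^sub>m a :: 'a mat)" "j < dim_col (1\<^sub>m a :: 'a mat)"
    then have i: "i < a" and j: "j < a" by auto
    have "(A' * B') $$ (i, j) = (\<Sum>l\<in>{0..<a}. if l < b then A $$ (i, l) * B $$ (l, j) else 0)"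
      using i j by (auto simp: A'_def B'_def scalar_prod_def intro!: sum.cong)
    also have "\<dots> = (\<Sum>l\<in>{0..<b}. A $$ (i, l) * B $$ (l, j))"
      using ba by (intro sum.mono_neutral_cong_right) auto
    also have "\<dots> = (A * B) $$ (i, j)"
      using i j A B by (simp add: scalar_prod_def)
    finally show "(A' * B') $$ (i, j) = 1\<^sub>m a $$ (i, j)" unfolding AB .
  qed (use A' B' in auto)
  then have "B' * A' = 1\<^sub>m a"
    by (rule mat_mult_left_right_inverse[OF A' B'])
  then have "(B' * A') $$ (a - 1, a - 1) = 1"
    using ba by simp
  moreover have "(B' * A') $$ (a - 1, a - 1) = 0"
    using ba A' B' by (auto simp: scalar_prod_def B'_def intro!: sum.neutral)
  ultimately show False by simp
qed

lemma two_sided_inverse_imp_square_invertible: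
  fixes A :: "'a::field mat"
  assumes A: "A \<in> carrier_mat a b" and B: "B \<in> carrier_mat b a"
    and AB: "A * B = 1\<^sub>m a" and BA: "B * A = 1\<^sub>m b"
  shows "a = b" and "invertible_mat A"
proof -
  show "a = b"
    using mat_right_inverse_dim_le[OF A B AB] mat_right_inverse_dim_le[OF B A BA] by simp
  then show "invertible_mat A"
    using A B AB BA unfolding invertible_mat_def inverts_mat_def square_mat.simps by auto
qed

lemma invertible_matE:
  assumes "invertible_mat (R :: 'a::semiring_1 mat)" and R: "R \<in> carrier_mat m m"
  obtains S where "S \<in> carrier_mat m m" "R * S = 1\<^sub>m m" "S * R = 1\<^sub>m m"
proof -
  obtain S where RS: "R * S = 1\<^sub>m m" and SR: "S * R = 1\<^sub>m (dim_row S)"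
    using assms unfolding invertible_mat_def inverts_mat_def by auto
  have "S \<in> carrier_mat m m"
    using R arg_cong[OF RS, of dim_col] arg_cong[OF SR, of dim_col] by auto
  with RS SR that show thesis by auto
qed

lemma mat_mult_right_invertible_zero:
  fixes X :: "'a::semiring_1 mat"
  assumes X: "X \<in> carrier_mat r n" and Q: "Q \<in> carrier_mat n n" "Qi \<in> carrier_mat n n"
    and QQi: "Q * Qi = 1\<^sub>m n" and XQ: "X * Q = 0\<^sub>m r n"
  shows "X = 0\<^sub>m r n"
proof -
  have "X = X * Q * Qi"
    using X Q QQi by (simp add: assoc_mult_mat[of X r n Q n Qi n])
  then show ?thesis
    using XQ Q by simp
qed

lemma mat_mult_both_sides_inverse:
  fixes X :: "'a::semiring_1 mat"
  assumes X: "X \<in> carrier_mat a b" and R: "R \<in> carrier_mat a a" "S \<in> carrier_mat a a"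
    and P: "P \<in> carrier_mat b b" "P' \<in> carrier_mat b b"
    and SR: "S * R = 1\<^sub>m a" and PP': "P * P' = 1\<^sub>m b"
    and Y: "Y = R * X * P"
  shows "X = S * Y * P'"
proof -
  have "S * Y * P' = S * ((R * X * P) * P')"
    unfolding Y by (rule assoc_mult_mat[of _ a a _ b _ b]) (use X R P in auto)
  also have "\<dots> = S * (R * X * (P * P'))"
    using X R P by (subst assoc_mult_mat[of "R * X" a b P b P' b]) auto
  also have "\<dots> = (S * R) * X"
    using X R PP' by (simp add: assoc_mult_mat[of S a a R a X b])
  finally show ?thesis
    using X SR by simp
qed

lemma aci_rows_indep_left_mult_zero:
  fixes X :: "'a::field mat"
  assumes indep: "aci_rows_indep k r A" and A: "\<forall>s\<le>k. A s \<in> carrier_mat r c"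
    and X: "X \<in> carrier_mat p r" and XA: "\<forall>s\<le>k. X * A s = 0\<^sub>m p c"
  shows "X = 0\<^sub>m p r"
proof (rule eq_matI)
  fix i j assume "i < dim_row (0\<^sub>m p r :: 'a mat)" "j < dim_col (0\<^sub>m p r :: 'a mat)"
  then have i: "i < p" and j: "j < r" by auto
  have "transpose_mat (A s) *\<^sub>v row X i = 0\<^sub>v (dim_col (A s))" if s: "s \<le> k" for s
  proof (rule eq_vecI)
    fix l assume "l < dim_vec (0\<^sub>v (dim_col (A s)) :: 'a vec)"
    moreover have As: "A s \<in> carrier_mat r c"
      using A s by simp
    ultimately have l: "l < c"
      by simp
    have "(transpose_mat (A s) *\<^sub>v row X i) $ l = col (A s) l \<bullet> row X i"
      using As l by simp
    also have "\<dots> = row X i \<bullet> col (A s) l"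
      using As X by (intro comm_scalar_prod[of _ r]) auto
    also have "\<dots> = (X * A s) $$ (i, l)"
      using As X i l by simp
    finally show "(transpose_mat (A s) *\<^sub>v row X i) $ l = 0\<^sub>v (dim_col (A s)) $ l"
      using XA s i l As by simp
  qed (use A s in simp)
  then have "row X i = 0\<^sub>v r"
    by (intro indep[unfolded aci_rows_indep_def, rule_format]) (use X in auto)
  moreover have "X $$ (i, j) = row X i $ j"
    using X i j by simp
  ultimately show "X $$ (i, j) = 0\<^sub>m p r $$ (i, j)"
    using i j by simp
qed (use X in simp_all)

lemma mult_block_triangular_block_diag:
  fixes R11 :: "'a::semiring_1 mat"
  assumes "R11 \<in> carrier_mat r1 c1" "R12 \<in> carrier_mat r1 c2" "R21 \<in> carrier_mat r2 c1"
    "R22 \<in> carrier_mat r2 c2" "A \<in> carrier_mat c1 n1" "B \<in> carrier_mat c1 n2"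
    "C \<in> carrier_mat c2 n2" "Q \<in> carrier_mat n1 n1" "Q' \<in> carrier_mat n2 n2"
  shows "four_block_mat R11 R12 R21 R22 * four_block_mat A B (0\<^sub>m c2 n1) C *
      four_block_mat Q (0\<^sub>m n1 n2) (0\<^sub>m n2 n1) Q' =
    four_block_mat (R11 * A * Q) ((R11 * B + R12 * C) * Q') (R21 * A * Q) ((R21 * B + R22 * C) * Q')"
proof -
  have left: "four_block_mat R11 R12 R21 R22 * four_block_mat A B (0\<^sub>m c2 n1) C =
      four_block_mat (R11 * A) (R11 * B + R12 * C) (R21 * A) (R21 * B + R22 * C)"
    using assms by (subst mult_four_block_mat[of _ r1 c1 _ c2 _ r2 _ _ n1 _ n2]) auto
  show ?thesis
    unfolding left using assms by (subst mult_four_block_mat[of _ r1 n1 _ n2 _ r2 _ _ n1 _ n2]) auto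
qed

lemma block_triangular_transform:
  fixes R :: "'a::field mat"
  assumes R: "R \<in> carrier_mat m m" and m1: "m1 \<le> m" and m2: "m2 \<le> m"
    and dims1: "\<forall>s\<le>k. A1 s \<in> carrier_mat m1 n1 \<and> B1 s \<in> carrier_mat m1 n2 \<and>
                  C1 s \<in> carrier_mat (m - m1) n2"
    and dims2: "\<forall>s\<le>k. A2 s \<in> carrier_mat m2 n1 \<and> B2 s \<in> carrier_mat m2 n2 \<and>
                  C2 s \<in> carrier_mat (m - m2) n2"
    and Q: "Q \<in> carrier_mat n1 n1" "Qi \<in> carrier_mat n1 n1" "Q * Qi = 1\<^sub>m n1"
    and Q': "Q' \<in> carrier_mat n2 n2"
    and eq: "\<forall>s\<le>k. four_block_mat (A2 s) (B2 s) (0\<^sub>m (m - m2) n1) (C2 s) =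
      R * four_block_mat (A1 s) (B1 s) (0\<^sub>m (m - m1) n1) (C1 s) *
      four_block_mat Q (0\<^sub>m n1 n2) (0\<^sub>m n2 n1) Q'"
    and indep: "aci_rows_indep k m1 A1"
  obtains R11 R12 R22 where "R11 \<in> carrier_mat m2 m1" "R12 \<in> carrier_mat m2 (m - m1)"
    "R22 \<in> carrier_mat (m - m2) (m - m1)" "R = four_block_mat R11 R12 (0\<^sub>m (m - m2) m1) R22"
    "\<forall>s\<le>k. A2 s = R11 * A1 s * Q" "\<forall>s\<le>k. C2 s = R22 * C1 s * Q'"
proof -
  obtain R11 R12 R21 R22 where sp: "split_block R m2 m1 = (R11, R12, R21, R22)"
    by (metis prod_cases4)
  have "dim_row R = m2 + (m - m2)" "dim_col R = m1 + (m - m1)"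
    using R m1 m2 by auto
  note blocks = split_block[OF sp this]
  have compare: "A2 s = R11 * A1 s * Q \<and> R21 * A1 s * Q = 0\<^sub>m (m - m2) n1 \<and>
      C2 s = (R21 * B1 s + R22 * C1 s) * Q'" if s: "s \<le> k" for s
  proof -
    have c1: "A1 s \<in> carrier_mat m1 n1" "B1 s \<in> carrier_mat m1 n2" "C1 s \<in> carrier_mat (m - m1) n2"
      using dims1 s by auto
    have c2: "A2 s \<in> carrier_mat m2 n1" "B2 s \<in> carrier_mat m2 n2" "C2 s \<in> carrier_mat (m - m2) n2"
      using dims2 s by auto
    have "four_block_mat (A2 s) (B2 s) (0\<^sub>m (m - m2) n1) (C2 s) =
        four_block_mat (R11 * A1 s * Q) ((R11 * B1 s + R12 * C1 s) * Q')
          (R21 * A1 s * Q) ((R21 * B1 s + R22 * C1 s) * Q')"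
      unfolding eq[rule_format, OF s] blocks(5)
      by (rule mult_block_triangular_block_diag[OF blocks(1-4) c1 Q(1) Q'])
    moreover have "R11 * A1 s * Q \<in> carrier_mat m2 n1"
      "(R11 * B1 s + R12 * C1 s) * Q' \<in> carrier_mat m2 n2"
      "R21 * A1 s * Q \<in> carrier_mat (m - m2) n1"
      "(R21 * B1 s + R22 * C1 s) * Q' \<in> carrier_mat (m - m2) n2"
      using blocks(1-4) c1 Q(1) Q' by auto
    ultimately show ?thesis
      using four_block_mat_eqD[OF c2(1,2) zero_carrier_mat c2(3)] by metis
  qed
  have "R21 * A1 s = 0\<^sub>m (m - m2) n1" if s: "s \<le> k" for s
    by (rule mat_mult_right_invertible_zero[OF _ Q]) (use compare[OF s] blocks(3) dims1 s in auto)
  then have R21: "R21 = 0\<^sub>m (m - m2) m1"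
    using aci_rows_indep_left_mult_zero[OF indep _ blocks(3)] dims1 by blast
  have "C2 s = R22 * C1 s * Q'" if s: "s \<le> k" for s
    using compare[OF s] blocks(3,4) dims1 s unfolding R21 by auto
  then show thesis
    using that[OF blocks(1,2,4)] blocks(5) compare unfolding R21 by blast
qed

lemma block_triangular_inverse_diag:
  fixes R11 :: "'a::semiring_1 mat"
  assumes "R11 \<in> carrier_mat a b" "R12 \<in> carrier_mat a d" "R22 \<in> carrier_mat c d"
    "S11 \<in> carrier_mat b a" "S12 \<in> carrier_mat b c" "S22 \<in> carrier_mat d c"
    and inv: "four_block_mat R11 R12 (0\<^sub>m c b) R22 * four_block_mat S11 S12 (0\<^sub>m d a) S22 =
      1\<^sub>m (a + c)"
  shows "R11 * S11 = 1\<^sub>m a" and "R22 * S22 = 1\<^sub>m c"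
proof -
  have "four_block_mat (R11 * S11) (R11 * S12 + R12 * S22) (0\<^sub>m c a) (R22 * S22) =
      four_block_mat (1\<^sub>m a) (0\<^sub>m a c) (0\<^sub>m c a) (1\<^sub>m c)"
    using inv assms by (simp add: mult_four_block_mat[of _ a b _ d _ c _ _ a _ c])
  moreover have "R11 * S11 \<in> carrier_mat a a" "R11 * S12 + R12 * S22 \<in> carrier_mat a c"
    "R22 * S22 \<in> carrier_mat c c"
    using assms by auto
  ultimately show "R11 * S11 = 1\<^sub>m a" and "R22 * S22 = 1\<^sub>m c"
    using four_block_mat_eqD[of "R11 * S11" a a "R11 * S12 + R12 * S22" c "0\<^sub>m c a" c "R22 * S22"
        "1\<^sub>m a" "0\<^sub>m a c" "0\<^sub>m c a" "1\<^sub>m c"]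
    by simp_all
qed

lemma block_triangular_inverse_invertible_diag:
  fixes R11 :: "'a::field mat"
  assumes m1: "m1 \<le> m" and m2: "m2 \<le> m"
    and R: "R11 \<in> carrier_mat m2 m1" "R12 \<in> carrier_mat m2 (m - m1)"
      "R22 \<in> carrier_mat (m - m2) (m - m1)"
    and S: "S11 \<in> carrier_mat m1 m2" "S12 \<in> carrier_mat m1 (m - m2)"
      "S22 \<in> carrier_mat (m - m1) (m - m2)"
    and RS: "four_block_mat R11 R12 (0\<^sub>m (m - m2) m1) R22 *
      four_block_mat S11 S12 (0\<^sub>m (m - m1) m2) S22 = 1\<^sub>m m"
    and SR: "four_block_mat S11 S12 (0\<^sub>m (m - m1) m2) S22 *
      four_block_mat R11 R12 (0\<^sub>m (m - m2) m1) R22 = 1\<^sub>m m"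
  shows "m1 = m2" and "invertible_mat R11" and "invertible_mat R22"
proof -
  have RS': "R11 * S11 = 1\<^sub>m m2" "R22 * S22 = 1\<^sub>m (m - m2)"
    using block_triangular_inverse_diag[OF R S] RS m2 by simp_all
  have SR': "S11 * R11 = 1\<^sub>m m1" "S22 * R22 = 1\<^sub>m (m - m1)"
    using block_triangular_inverse_diag[OF S R] SR m1 by simp_all
  show "m1 = m2" "invertible_mat R11"
    using two_sided_inverse_imp_square_invertible[OF R(1) S(1) RS'(1) SR'(1)] by simp_all
  show "invertible_mat R22"
    using two_sided_inverse_imp_square_invertible[OF R(3) S(3) RS'(2) SR'(2)] by simp
qed

lemma block_triangular_equiv:
  fixes R :: "'a::field mat"
  assumes m1: "m1 \<le> m" and m2: "m2 \<le> m"
    and dims1: "\<forall>s\<le>k. A1 s \<in> carrier_mat m1 n1 \<and> B1 s \<in> carrier_mat m1 n2 \<and>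
                  C1 s \<in> carrier_mat (m - m1) n2"
    and dims2: "\<forall>s\<le>k. A2 s \<in> carrier_mat m2 n1 \<and> B2 s \<in> carrier_mat m2 n2 \<and>
                  C2 s \<in> carrier_mat (m - m2) n2"
    and R: "R \<in> carrier_mat m m" "S \<in> carrier_mat m m" "R * S = 1\<^sub>m m" "S * R = 1\<^sub>m m"
    and Q: "Q \<in> carrier_mat n1 n1" "Qi \<in> carrier_mat n1 n1" "Q * Qi = 1\<^sub>m n1" "Qi * Q = 1\<^sub>m n1"
    and Q': "Q' \<in> carrier_mat n2 n2" "Qi' \<in> carrier_mat n2 n2" "Q' * Qi' = 1\<^sub>m n2"
    and eq: "\<forall>s\<le>k. four_block_mat (A2 s) (B2 s) (0\<^sub>m (m - m2) n1) (C2 s) =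
      R * four_block_mat (A1 s) (B1 s) (0\<^sub>m (m - m1) n1) (C1 s) *
      four_block_mat Q (0\<^sub>m n1 n2) (0\<^sub>m n2 n1) Q'"
    and indep1: "aci_rows_indep k m1 A1" and indep2: "aci_rows_indep k m2 A2"
  obtains R11 R22 where "m1 = m2"
    "R11 \<in> carrier_mat m1 m1" "invertible_mat R11" "\<forall>s\<le>k. A2 s = R11 * A1 s * Q"
    "R22 \<in> carrier_mat (m - m1) (m - m1)" "invertible_mat R22" "\<forall>s\<le>k. C2 s = R22 * C1 s * Q'"
proof -
  let ?P = "four_block_mat Q (0\<^sub>m n1 n2) (0\<^sub>m n2 n1) Q'"
  let ?Pi = "four_block_mat Qi (0\<^sub>m n1 n2) (0\<^sub>m n2 n1) Qi'"
  have P: "?P \<in> carrier_mat (n1 + n2) (n1 + n2)" "?Pi \<in> carrier_mat (n1 + n2) (n1 + n2)"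
    "?P * ?Pi = 1\<^sub>m (n1 + n2)"
    using Q Q' four_block_carrier_mat[of Q n1 n1 Q' n2 n2] four_block_carrier_mat[of Qi n1 n1 Qi' n2 n2]
    by (simp_all add: mult_four_block_diag_mat)
  have backward: "\<forall>s\<le>k. four_block_mat (A1 s) (B1 s) (0\<^sub>m (m - m1) n1) (C1 s) =
      S * four_block_mat (A2 s) (B2 s) (0\<^sub>m (m - m2) n1) (C2 s) * ?Pi"
  proof (intro allI impI)
    fix s assume s: "s \<le> k"
    have "four_block_mat (A1 s) (B1 s) (0\<^sub>m (m - m1) n1) (C1 s) \<in> carrier_mat m (n1 + n2)"
      using four_block_carrier_mat[of "A1 s" m1 n1 "C1 s" "m - m1" n2] dims1 s m1 by simp
    then show "four_block_mat (A1 s) (B1 s) (0\<^sub>m (m - m1) n1) (C1 s) =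
        S * four_block_mat (A2 s) (B2 s) (0\<^sub>m (m - m2) n1) (C2 s) * ?Pi"
      by (rule mat_mult_both_sides_inverse[OF _ R(1,2) P(1,2) R(4) P(3) eq[rule_format, OF s]])
  qed
  obtain R11 R12 R22 where Rb: "R11 \<in> carrier_mat m2 m1" "R12 \<in> carrier_mat m2 (m - m1)"
      "R22 \<in> carrier_mat (m - m2) (m - m1)" "R = four_block_mat R11 R12 (0\<^sub>m (m - m2) m1) R22"
    and equiv: "\<forall>s\<le>k. A2 s = R11 * A1 s * Q" "\<forall>s\<le>k. C2 s = R22 * C1 s * Q'"
    using block_triangular_transform[OF R(1) m1 m2 dims1 dims2 Q(1-3) Q'(1) eq indep1] .
  obtain S11 S12 S22 where Sb: "S11 \<in> carrier_mat m1 m2" "S12 \<in> carrier_mat m1 (m - m2)"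
      "S22 \<in> carrier_mat (m - m1) (m - m2)" "S = four_block_mat S11 S12 (0\<^sub>m (m - m1) m2) S22"
    using block_triangular_transform[OF R(2) m2 m1 dims2 dims1 Q(2,1,4) Q'(2) backward indep2] .
  note diag = block_triangular_inverse_invertible_diag[OF m1 m2 Rb(1-3) Sb(1-3)
      R(3)[unfolded Rb(4) Sb(4)] R(4)[unfolded Rb(4) Sb(4)]]
  then have square: "R11 \<in> carrier_mat m1 m1" "R22 \<in> carrier_mat (m - m1) (m - m1)"
    using Rb(1,3) by simp_all
  show thesis
    by (rule that[OF diag(1) square(1) diag(2) equiv(1) square(2) diag(3) equiv(2)])
qed

theorem lemma4p3:
  fixes k m n n1 m1 m2 :: nat
    and A1 B1 C1 A2 B2 C2 M1 M2 :: "nat \<Rightarrow> 'a::field mat"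
    and R Q Q' :: "'a mat"
  assumes "n1 \<le> n" and "m1 \<le> m" and "m2 \<le> m"
    and "\<forall>s\<le>k. A1 s \<in> carrier_mat m1 n1 \<and> B1 s \<in> carrier_mat m1 (n - n1) \<and>
                C1 s \<in> carrier_mat (m - m1) (n - n1)"
    and "\<forall>s\<le>k. A2 s \<in> carrier_mat m2 n1 \<and> B2 s \<in> carrier_mat m2 (n - n1) \<and>
                C2 s \<in> carrier_mat (m - m2) (n - n1)"
    and "\<forall>s\<le>k. M1 s = four_block_mat (A1 s) (B1 s) (0\<^sub>m (m - m1) n1) (C1 s)"
    and "\<forall>s\<le>k. M2 s = four_block_mat (A2 s) (B2 s) (0\<^sub>m (m - m2) n1) (C2 s)"
    and "aci_mat k m n M1" and "aci_mat k m n M2"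
    and "R \<in> carrier_mat m m" and "invertible_mat R"
    and "is_perm_mat n1 Q" and "is_perm_mat (n - n1) Q'"
    and "\<forall>s\<le>k. M2 s = R * M1 s *
            four_block_mat Q (0\<^sub>m n1 (n - n1)) (0\<^sub>m (n - n1) n1) Q'"
    and "aci_rows_indep k m1 A1" and "aci_rows_indep k m2 A2"
  shows "aci_equiv k m1 n1 A1 m2 n1 A2 \<and> aci_equiv k (m - m1) (n - n1) C1 (m - m2) (n - n1) C2"
proof -
  obtain S where S: "S \<in> carrier_mat m m" "R * S = 1\<^sub>m m" "S * R = 1\<^sub>m m"
    using invertible_matE[OF assms(11,10)] by blast
  note Q = perm_mat_carrier[OF assms(12)] perm_mat_transpose_inverse[OF assms(12)]
  note Q' = perm_mat_carrier[OF assms(13)] perm_mat_transpose_inverse[OF assms(13)]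
  have forward: "\<forall>s\<le>k. four_block_mat (A2 s) (B2 s) (0\<^sub>m (m - m2) n1) (C2 s) =
      R * four_block_mat (A1 s) (B1 s) (0\<^sub>m (m - m1) n1) (C1 s) *
      four_block_mat Q (0\<^sub>m n1 (n - n1)) (0\<^sub>m (n - n1) n1) Q'"
    using assms(6,7,14) by simp
  obtain R11 R22 where "m1 = m2"
    "R11 \<in> carrier_mat m1 m1" "invertible_mat R11" "\<forall>s\<le>k. A2 s = R11 * A1 s * Q"
    "R22 \<in> carrier_mat (m - m1) (m - m1)" "invertible_mat R22" "\<forall>s\<le>k. C2 s = R22 * C1 s * Q'"
    using block_triangular_equiv[OF assms(2-5) assms(10) S Q(1-4) Q'(1-3) forward assms(15,16)] .
  then show ?thesis
    unfolding aci_equiv_def using assms(12,13)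
    by (intro conjI exI[of _ R11] exI[of _ Q] exI[of _ R22] exI[of _ Q']) simp_all
qed

end
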